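(* Let $U_1,\dots,U_n$ be i.i.d. uniform on $(0,1)$ with order statistics $U_{(1)}\le\dots\le U_{(n)}$, let $k_1,k_2\in\mathbb{N}$ with $k_1+k_2<n$, and let $\Xi:=1-U_{(n-k_2+1)}+U_{(k_1)}$. Then for any $t>0$, \[\Pr\left(\Xi>\frac{(\sqrt{k_1+k_2-1}+\sqrt t)^2}{n}\right)\leq e^{-t}.\] *)

theory Defs
  imports "HOL-Probability.Probability"
begin

text \<open>The k-th order statistic (1-indexed: k = 1 is the minimum, k = n the maximum)
of the sample x 0, ..., x (n-1).\<close>
definition order_stat :: "(nat \<Rightarrow> real) \<Rightarrow> nat \<Rightarrow> nat \<Rightarrow> real" where
  "order_stat x n k = sort (map x [0..<n]) ! (k - 1)"

end

theory Submission
  imports Defs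
begin

text \<open>Rotations of the circle \<open>\<real>/\<int>\<close>, represented by \<open>(0, 1)\<close>, preserve the law of an
  i.i.d. uniform sample. Let \<open>U\<^sub>j\<close> be the \<open>(n - k\<^sub>2 + 1)\<close>-th order statistic; rotate the sample
  so that \<open>U\<^sub>j\<close> moves to the origin, and let coordinate \<open>j\<close> record the image \<open>1 - U\<^sub>j\<close> of the
  old origin. If \<open>\<Xi> > x\<close>, exactly \<open>k\<^sub>2 - 1\<close> rotated points lie below coordinate \<open>j\<close> and at most
  \<open>m = k\<^sub>1 + k\<^sub>2 - 1\<close> of them lie in \<open>[0, x]\<close>. Distinct points have distinct ranks, so these
  events are disjoint in \<open>j\<close>, and by rotation invariance \<open>P(\<Xi> > x)\<close> is at most the probability
  that a \<open>Bin(n, x)\<close> variable is at most \<open>m\<close>. The Chernoff bound with \<open>x = (\<surd>m + \<surd>t)\<^sup>2 / n\<close>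
  estimates this by \<open>e\<^sup>-\<^sup>t\<close>.\<close>

definition uniform01 :: "real measure" where
  "uniform01 = uniform_measure lborel {0<..<1}"

abbreviation uniform_cube :: "nat \<Rightarrow> (nat \<Rightarrow> real) measure" where
  "uniform_cube n \<equiv> PiM {..<n} (\<lambda>_. uniform01)"

lemma uniform01_eq_density: "uniform01 = density lborel (indicator {0<..<1})"
  unfolding uniform01_def uniform_measure_def by (simp add: divide_ennreal_def)

lemma prob_space_uniform01: "prob_space uniform01"
  unfolding uniform01_def by (rule prob_space_uniform_measure) auto

lemma sets_uniform01 [simp, measurable_cong]: "sets uniform01 = sets borel"
  by (simp add: uniform01_eq_density)

lemma emeasure_uniform01: "A \<in> sets borel \<Longrightarrow> emeasure uniform01 A = emeasure lborel ({0<..<1} \<inter> A)"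
  unfolding uniform01_def by (simp add: emeasure_uniform_measure divide_ennreal_def)

lemma AE_uniform01: "AE x in uniform01. 0 < x \<and> x < 1"
  unfolding uniform01_def by (rule AE_uniform_measureI) auto

lemma borel_measurable_frac [measurable]: "(frac :: real \<Rightarrow> real) \<in> borel_measurable borel"
  unfolding frac_def by measurable

lemma nn_integral_uniform01:
  "f \<in> borel_measurable borel \<Longrightarrow>
    (\<integral>\<^sup>+x. f x \<partial>uniform01) = (\<integral>\<^sup>+x. indicator {0<..<1} x * f x \<partial>lborel)"
  unfolding uniform01_eq_density by (rule nn_integral_density) auto

lemma nn_integral_uniform01_reflect:
  assumes [measurable]: "f \<in> borel_measurable borel"
  shows "(\<integral>\<^sup>+x. f (1 - x) \<partial>uniform01) = (\<integral>\<^sup>+x. f x \<partial>uniform01)"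
proof -
  have "(\<integral>\<^sup>+x. f x \<partial>uniform01) = (\<integral>\<^sup>+x. indicator {0<..<1} x * f x \<partial>lborel)"
    by (simp add: nn_integral_uniform01)
  also have "\<dots> = (\<integral>\<^sup>+x. indicator {0<..<1} (1 - x) * f (1 - x) \<partial>lborel)"
    using nn_integral_real_affine[of "\<lambda>x. indicator {0<..<1} x * f x" "-1" 1] by simp
  also have "\<dots> = (\<integral>\<^sup>+x. f (1 - x) \<partial>uniform01)"
    by (auto simp: nn_integral_uniform01 indicator_def intro!: nn_integral_cong)
  finally show ?thesis ..
qed

lemma nn_integral_uniform01_rotate:
  assumes [measurable]: "f \<in> borel_measurable borel" and c: "0 < c" "c < 1"
  shows "(\<integral>\<^sup>+x. f (frac (x - c)) \<partial>uniform01) = (\<integral>\<^sup>+x. f x \<partial>uniform01)"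
proof -
  have "(\<integral>\<^sup>+x. f (frac (x - c)) \<partial>uniform01)
      = (\<integral>\<^sup>+x. indicator {c<..<1} x * f (x - c) + indicator {0<..<c} x * f (x - c + 1) \<partial>lborel)"
  proof -
    have "AE x in lborel. indicator {0<..<1} x * f (frac (x - c))
        = indicator {c<..<1} x * f (x - c) + indicator {0<..<c} x * f (x - c + 1)"
      using AE_lborel_singleton[of c]
    proof eventually_elim
      case (elim x)
      have "floor (x - c) = (if x < c then -1 else 0)" if "0 < x" "x < 1" "x \<noteq> c"
        using that c by (simp add: floor_eq_iff)
      then show ?case
        using elim c by (auto simp: indicator_def frac_def)
    qed
    then show ?thesis
      by (simp add: nn_integral_uniform01 frac_def cong: nn_integral_cong_AE)
  qed
  also have "\<dots> = (\<integral>\<^sup>+x. indicator {c<..<1} x * f (x - c) \<partial>lborel)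
                  + (\<integral>\<^sup>+x. indicator {0<..<c} x * f (x - c + 1) \<partial>lborel)"
    by (rule nn_integral_add) auto
  also have "\<dots> = (\<integral>\<^sup>+x. indicator {0<..<1 - c} x * f x \<partial>lborel)
                  + (\<integral>\<^sup>+x. indicator {1 - c<..<1} x * f x \<partial>lborel)"
    using nn_integral_real_affine[of "\<lambda>x. indicator {c<..<1} x * f (x - c)" 1 c]
      nn_integral_real_affine[of "\<lambda>x. indicator {0<..<c} x * f (x - c + 1)" 1 "c - 1"]
    by (simp add: indicator_def algebra_simps)
  also have "\<dots> = (\<integral>\<^sup>+x. indicator {0<..<1 - c} x * f x + indicator {1 - c<..<1} x * f x \<partial>lborel)"
    by (rule nn_integral_add[symmetric]) auto
  also have "\<dots> = (\<integral>\<^sup>+x. indicator {0<..<1} x * f x \<partial>lborel)"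
    using AE_lborel_singleton[of "1 - c"]
    by (intro nn_integral_cong_AE, eventually_elim) (use c in \<open>auto simp: indicator_def\<close>)
  also have "\<dots> = (\<integral>\<^sup>+x. f x \<partial>uniform01)"
    by (simp add: nn_integral_uniform01)
  finally show ?thesis .
qed

section \<open>Order statistics, ranks and counts\<close>

definition count_le :: "nat \<Rightarrow> (nat \<Rightarrow> real) \<Rightarrow> real \<Rightarrow> nat" where
  "count_le n u y = card {l\<in>{..<n}. u l \<le> y}"

definition sample_rank :: "nat \<Rightarrow> (nat \<Rightarrow> real) \<Rightarrow> nat \<Rightarrow> nat" where
  "sample_rank n u j = card {l\<in>{..<n}. u l < u j}"

lemma sorted_nth_le_iff_card:
  fixes s :: "'a::linorder list"
  assumes "sorted s" "k < length s"
  shows "s ! k \<le> y \<longleftrightarrow> k < card {i. i < length s \<and> s ! i \<le> y}"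
proof
  assume "s ! k \<le> y"
  then have "{..k} \<subseteq> {i. i < length s \<and> s ! i \<le> y}"
    using assms by (auto dest: sorted_nth_mono[of s _ k] intro: order.trans)
  from card_mono[OF _ this] show "k < card {i. i < length s \<and> s ! i \<le> y}" by simp
next
  assume k: "k < card {i. i < length s \<and> s ! i \<le> y}"
  show "s ! k \<le> y"
  proof (rule ccontr)
    assume "\<not> s ! k \<le> y"
    have "i < k" if "i < length s" "s ! i \<le> y" for i
    proof (rule ccontr)
      assume "\<not> i < k"
      then have "s ! k \<le> s ! i"
        using assms that by (simp add: sorted_nth_mono)
      then show False
        using that \<open>\<not> s ! k \<le> y\<close> by simp
    qed
    then have "{i. i < length s \<and> s ! i \<le> y} \<subseteq> {..<k}"
      by auto
    from card_mono[OF _ this] k show False by simp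
  qed
qed

lemma order_stat_le_iff_count_le:
  assumes "1 \<le> k" "k \<le> n"
  shows "order_stat u n k \<le> y \<longleftrightarrow> k \<le> count_le n u y"
proof -
  let ?s = "sort (map u [0..<n])"
  have "count_le n u y = length (filter (\<lambda>z. z \<le> y) (map u [0..<n]))"
    unfolding count_le_def length_filter_conv_card by (auto intro!: arg_cong[where f = card])
  also have "\<dots> = length (filter (\<lambda>z. z \<le> y) ?s)"
    by (metis mset_filter mset_sort size_mset)
  also have "\<dots> = card {i. i < length ?s \<and> ?s ! i \<le> y}"
    by (rule length_filter_conv_card)
  finally show ?thesis
    using assms sorted_nth_le_iff_card[of ?s "k - 1" y] by (simp add: order_stat_def, linarith)
qed

lemma strict_sorted_card_less_nth:
  fixes s :: "'a::linorder list"
  assumes "sorted_wrt (<) s" "m < length s"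
  shows "card {z \<in> set s. z < s ! m} = m"
proof -
  have "{z \<in> set s. z < s ! m} = (!) s ` {..<m}"
  proof (intro equalityI subsetI)
    fix z assume "z \<in> {z \<in> set s. z < s ! m}"
    then obtain i where "i < length s" "z = s ! i" "s ! i < s ! m"
      by (auto simp: in_set_conv_nth)
    moreover from this have "i < m"
      using assms by (metis linorder_neqE_nat order.asym sorted_wrt_iff_nth_less)
    ultimately show "z \<in> (!) s ` {..<m}" by auto
  qed (use assms in \<open>auto simp: sorted_wrt_iff_nth_less\<close>)
  also have "card \<dots> = m"
    using assms by (subst card_image) (auto simp: strict_sorted_iff intro!: inj_on_nth)
  finally show ?thesis .
qed

lemma order_stat_attained_at_rank:
  assumes "inj_on u {..<n}" "m < n"
  obtains j where "j < n" "order_stat u n (Suc m) = u j" "sample_rank n u j = m"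
proof -
  let ?s = "sort (map u [0..<n])"
  have sorted: "sorted_wrt (<) ?s"
    using assms by (simp add: strict_sorted_iff distinct_map lessThan_atLeast0)
  have set_s: "set ?s = u ` {..<n}"
    by (simp add: lessThan_atLeast0)
  obtain j where j: "j < n" "?s ! m = u j"
    using assms(2) nth_mem[of m ?s] set_s by auto
  have "sample_rank n u j = card (u ` {l\<in>{..<n}. u l < u j})"
    unfolding sample_rank_def by (rule card_image[symmetric], rule inj_on_subset[OF assms(1)]) auto
  also have "u ` {l\<in>{..<n}. u l < u j} = {z \<in> set ?s. z < ?s ! m}"
    using set_s j by auto
  also have "card \<dots> = m"
    using sorted assms(2) by (intro strict_sorted_card_less_nth) auto
  finally show thesis
    using that j by (simp add: order_stat_def)
qed

lemma sample_rank_less: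
  assumes "j < n" "u j < u j'"
  shows "sample_rank n u j < sample_rank n u j'"
  unfolding sample_rank_def
proof (rule psubset_card_mono)
  show "{l\<in>{..<n}. u l < u j} \<subset> {l\<in>{..<n}. u l < u j'}"
    using assms by auto
qed simp

lemma inj_on_sample_rank:
  assumes "inj_on v {..<n}"
  shows "inj_on (sample_rank n v) {..<n}"
proof (rule inj_onI)
  fix j j' assume jj: "j \<in> {..<n}" "j' \<in> {..<n}"
  assume "sample_rank n v j = sample_rank n v j'"
  then show "j = j'"
  proof (rule contrapos_pp)
    assume "j \<noteq> j'"
    with assms jj have "v j \<noteq> v j'"
      by (auto dest: inj_onD)
    then show "sample_rank n v j \<noteq> sample_rank n v j'"
      using sample_rank_less[of j n v j'] sample_rank_less[of j' n v j] jj by (cases "v j < v j'") auto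
  qed
qed

lemma order_stat_cong:
  assumes "\<And>i. i < n \<Longrightarrow> u i = w i"
  shows "order_stat u n k = order_stat w n k"
proof -
  have "map u [0..<n] = map w [0..<n]"
    using assms by simp
  then show ?thesis
    by (simp only: order_stat_def)
qed

section \<open>Rotating a sample on the circle\<close>

text \<open>Coordinate \<open>j\<close> records the image \<open>frac (0 - u j) = 1 - u j\<close> of the origin rather than
  the image \<open>0\<close> of \<open>u j\<close>; this keeps the map measure preserving.\<close>
definition rotate_sample :: "nat \<Rightarrow> nat \<Rightarrow> (nat \<Rightarrow> real) \<Rightarrow> nat \<Rightarrow> real" where
  "rotate_sample n j u = (\<lambda>i\<in>{..<n}. if i = j then 1 - u j else frac (u i - u j))"

lemma rotate_sample_above:
  assumes "l < n" "0 < u j" "u l < 1" "u j < u l"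
  shows "rotate_sample n j u l = u l - u j"
  using assms by (auto simp: rotate_sample_def frac_eq)

lemma rotate_sample_below:
  assumes "l < n" "0 < u l" "u j < 1" "u l < u j"
  shows "rotate_sample n j u l = u l - u j + 1"
proof -
  have "floor (u l - u j) = -1"
    using assms by (simp add: floor_eq_iff)
  then show ?thesis
    using assms by (auto simp: rotate_sample_def frac_def)
qed

lemma card_below_plus_card_above:
  assumes "inj_on u {..<n}" "j < n"
  shows "sample_rank n u j + card {l\<in>{..<n}. u j < u l} = n - 1"
proof -
  have "u l < u j \<or> l = j \<or> u j < u l" if "l < n" for l
    using linorder_cases[of "u l" "u j"] inj_onD[OF assms(1), of l j] that assms(2) by auto
  then have "{..<n} = {l\<in>{..<n}. u l < u j} \<union> insert j {l\<in>{..<n}. u j < u l}"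
    using assms(2) by auto
  from arg_cong[where f = card, OF this]
  have "n = card ({l\<in>{..<n}. u l < u j} \<union> insert j {l\<in>{..<n}. u j < u l})"
    by (simp only: card_lessThan)
  also have "\<dots> = sample_rank n u j + (1 + card {l\<in>{..<n}. u j < u l})"
    by (subst card_Un_disjoint) (auto simp: sample_rank_def)
  finally show ?thesis
    by linarith
qed

lemma sample_rank_rotate_sample:
  assumes "inj_on u {..<n}" "\<And>i. i < n \<Longrightarrow> 0 < u i \<and> u i < 1" "j < n"
  shows "sample_rank n (rotate_sample n j u) j = card {l\<in>{..<n}. u j < u l}"
proof -
  have self: "rotate_sample n j u j = 1 - u j"
    using assms(3) by (simp add: rotate_sample_def)
  have "rotate_sample n j u l < rotate_sample n j u j \<longleftrightarrow> u j < u l" if "l < n" for l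
  proof (cases "u l" "u j" rule: linorder_cases)
    case less
    then have "rotate_sample n j u l = u l - u j + 1"
      using assms that by (intro rotate_sample_below) auto
    then show ?thesis
      using self less assms(2)[OF that] by simp
  next
    case equal
    then show ?thesis
      using assms that by (auto dest: inj_onD)
  next
    case greater
    then have "rotate_sample n j u l = u l - u j"
      using assms that by (intro rotate_sample_above) auto
    then show ?thesis
      using self greater assms(2)[OF that] by simp
  qed
  then have "{l\<in>{..<n}. rotate_sample n j u l < rotate_sample n j u j} = {l\<in>{..<n}. u j < u l}"
    by auto
  then show ?thesis
    by (simp add: sample_rank_def)
qed

lemma count_le_rotate_sample:
  assumes "inj_on u {..<n}" "\<And>i. i < n \<Longrightarrow> 0 < u i \<and> u i < 1" "j < n" "x < 1 - u j + u a"
  shows "count_le n (rotate_sample n j u) x \<le> card {l\<in>{..<n}. u j < u l} + 1 + sample_rank n u a"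
proof -
  have "u l < u a" if "l < n" "u l < u j" "rotate_sample n j u l \<le> x" for l
    using that assms rotate_sample_below[of l n u j] by simp
  moreover have "u l < u j \<or> l = j \<or> u j < u l" if "l < n" for l
    using linorder_cases[of "u l" "u j"] inj_onD[OF assms(1), of l j] that assms(3) by auto
  ultimately have "{l\<in>{..<n}. rotate_sample n j u l \<le> x}
      \<subseteq> {l\<in>{..<n}. u j < u l} \<union> {j} \<union> {l\<in>{..<n}. u l < u a}"
    by blast
  then have "count_le n (rotate_sample n j u) x
      \<le> card ({l\<in>{..<n}. u j < u l} \<union> {j} \<union> {l\<in>{..<n}. u l < u a})"
    unfolding count_le_def by (intro card_mono) auto
  also have "\<dots> \<le> card {l\<in>{..<n}. u j < u l} + 1 + sample_rank n u a"
    using card_Un_le[of "{l\<in>{..<n}. u j < u l} \<union> {j}" "{l\<in>{..<n}. u l < u a}"]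
      card_Un_le[of "{l\<in>{..<n}. u j < u l}" "{j}"]
    by (simp add: sample_rank_def)
  finally show ?thesis .
qed

lemma rotate_sample_spacing:
  assumes inj: "inj_on u {..<n}" and unit: "\<And>i. i < n \<Longrightarrow> 0 < u i \<and> u i < 1"
    and k: "1 \<le> k1" "1 \<le> k2" "k1 + k2 \<le> n"
    and gap: "1 - order_stat u n (n - k2 + 1) + order_stat u n k1 > x"
  obtains j where "j < n" "sample_rank n (rotate_sample n j u) j = k2 - 1"
    "count_le n (rotate_sample n j u) x < k1 + k2"
proof -
  have "n - k2 < n" "k1 - 1 < n"
    using k by auto
  obtain j where j: "j < n" "order_stat u n (Suc (n - k2)) = u j" "sample_rank n u j = n - k2"
    by (rule order_stat_attained_at_rank[OF inj \<open>n - k2 < n\<close>])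
  obtain a where a: "a < n" "order_stat u n (Suc (k1 - 1)) = u a" "sample_rank n u a = k1 - 1"
    by (rule order_stat_attained_at_rank[OF inj \<open>k1 - 1 < n\<close>])
  have "x < 1 - u j + u a"
    using gap j(2) a(2) k by simp
  have above: "card {l\<in>{..<n}. u j < u l} = k2 - 1"
    using card_below_plus_card_above[OF inj j(1)] j(3) k by linarith
  show thesis
  proof (rule that[OF j(1)])
    show "sample_rank n (rotate_sample n j u) j = k2 - 1"
      using sample_rank_rotate_sample[OF inj unit j(1)] above by simp
    show "count_le n (rotate_sample n j u) x < k1 + k2"
      using count_le_rotate_sample[OF inj unit j(1) \<open>x < 1 - u j + u a\<close>] a(3) above k by simp
  qed
qed

interpretation uniform01_product: product_prob_space "\<lambda>_::nat. uniform01" I for I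
  by (simp add: product_prob_space_def product_prob_space_axioms_def product_sigma_finite_def
      prob_space_imp_sigma_finite prob_space_uniform01)

lemma measurable_count_le [measurable]:
  "(\<lambda>v. count_le n v y) \<in> measurable (uniform_cube n) (count_space UNIV)"
  unfolding count_le_def by measurable

lemma measurable_sample_rank [measurable]:
  "j < n \<Longrightarrow> (\<lambda>v. sample_rank n v j) \<in> measurable (uniform_cube n) (count_space UNIV)"
  unfolding sample_rank_def by measurable

lemma measurable_rotate_sample [measurable]:
  "j < n \<Longrightarrow> rotate_sample n j \<in> measurable (uniform_cube n) (uniform_cube n)"
  unfolding rotate_sample_def by measurable

lemma pred_inj_on_uniform_cube [measurable]: "Measurable.pred (uniform_cube n) (\<lambda>v. inj_on v {..<n})"
proof -
  have eq: "Measurable.pred (uniform_cube n) (\<lambda>v. v i = v l)" if "i < n" "l < n" for i l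
  proof -
    note that [simp]
    have "{v \<in> space (uniform_cube n). v i = v l} \<in> sets (uniform_cube n)"
      by measurable
    then show ?thesis
      by (simp add: pred_def)
  qed
  show ?thesis
    unfolding inj_on_def by (intro pred_intros_finite pred_intros_logic measurable_const) (auto intro: eq)
qed

lemma borel_measurable_order_stat [measurable]:
  assumes "1 \<le> k" "k \<le> n"
  shows "(\<lambda>v. order_stat v n k) \<in> borel_measurable (uniform_cube n)"
proof (rule borel_measurableI_le)
  fix y
  show "{v \<in> space (uniform_cube n). order_stat v n k \<le> y} \<in> sets (uniform_cube n)"
    using assms by (simp add: order_stat_le_iff_count_le)
qed

lemma emeasure_uniform01_singleton [simp]: "emeasure uniform01 {y} = 0"
proof -
  have "emeasure lborel ({0<..<1} \<inter> {y}) \<le> emeasure lborel {y}"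
    by (intro emeasure_mono) auto
  then show ?thesis
    by (simp add: emeasure_uniform01)
qed

lemma AE_uniform_cube_neq:
  assumes "i < n" "l < n" "i \<noteq> l"
  shows "AE v in uniform_cube n. v i \<noteq> v l"
proof (rule AE_I')
  define J where "J = {..<n} - {i}"
  have J: "{..<n} = insert i J" "i \<notin> J" "finite J" "l \<in> J"
    using assms by (auto simp: J_def)
  let ?N = "{v \<in> space (uniform_cube n). v i = v l}"
  note assms(1,2) [simp]
  have N [measurable]: "?N \<in> sets (uniform_cube n)"
    by measurable
  have "emeasure (uniform_cube n) ?N = (\<integral>\<^sup>+v. indicator ?N v \<partial>uniform_cube n)"
    by simp
  also have "\<dots> = (\<integral>\<^sup>+y. (\<integral>\<^sup>+x. indicator ?N (x(i := y)) \<partial>PiM J (\<lambda>_. uniform01)) \<partial>uniform01)"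
    using borel_measurable_indicator[OF N] unfolding J(1)
    by (rule uniform01_product.product_nn_integral_insert_rev[OF J(3,2)])
  also have "\<dots> = (\<integral>\<^sup>+y. 0 \<partial>uniform01)"
  proof (intro nn_integral_cong)
    fix y
    have "indicator ?N (x(i := y)) = indicator {x \<in> space (PiM J (\<lambda>_. uniform01)). x l \<in> {y}} x"
      if "x \<in> space (PiM J (\<lambda>_. uniform01))" for x
      using that J assms by (auto simp: indicator_def space_PiM PiE_def extensional_def)
    then have "(\<integral>\<^sup>+x. indicator ?N (x(i := y)) \<partial>PiM J (\<lambda>_. uniform01))
        = (\<integral>\<^sup>+x. indicator {x \<in> space (PiM J (\<lambda>_. uniform01)). x l \<in> {y}} x \<partial>PiM J (\<lambda>_. uniform01))"
      by (rule nn_integral_cong)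
    also have "\<dots> = emeasure (PiM J (\<lambda>_. uniform01)) {x \<in> space (PiM J (\<lambda>_. uniform01)). x l \<in> {y}}"
      using J by (intro nn_integral_indicator) measurable
    also have "\<dots> = emeasure uniform01 {y}"
      using J by (intro uniform01_product.emeasure_PiM_Collect_single) auto
    finally show "(\<integral>\<^sup>+x. indicator ?N (x(i := y)) \<partial>PiM J (\<lambda>_. uniform01)) = 0"
      by simp
  qed
  also have "\<dots> = 0"
    by simp
  finally show "?N \<in> null_sets (uniform_cube n)"
    by (auto simp: null_sets_def)
qed auto

lemma AE_uniform_cube_generic: "AE v in uniform_cube n. inj_on v {..<n} \<and> (\<forall>i<n. 0 < v i \<and> v i < 1)"
proof -
  have "AE v in uniform_cube n. \<forall>i\<in>{..<n}. \<forall>l\<in>{..<n}. i \<noteq> l \<longrightarrow> v i \<noteq> v l"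
    by (intro AE_finite_allI) (auto intro: AE_uniform_cube_neq)
  moreover have "AE v in uniform_cube n. \<forall>i\<in>{..<n}. 0 < v i \<and> v i < 1"
    by (intro AE_finite_allI AE_PiM_component AE_uniform01 prob_space_uniform01) auto
  ultimately show ?thesis
    by eventually_elim (auto simp: inj_on_def)
qed

lemma prod_indicator_Pi:
  "finite I \<Longrightarrow> (\<Prod>i\<in>I. indicator (A i) (f i) :: 'b::comm_semiring_1) = indicator (Pi I A) f"
  by (induction I rule: finite_induct) (auto simp: indicator_def)

lemma nn_integral_rotated_box:
  fixes J :: "nat set"
  assumes "finite J" "\<And>i. i \<in> J \<Longrightarrow> A i \<in> sets borel" "0 < y" "y < 1"
  shows "(\<integral>\<^sup>+x. (\<Prod>i\<in>J. indicator (A i) (frac (x i - y))) \<partial>PiM J (\<lambda>_. uniform01))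
    = (\<Prod>i\<in>J. emeasure uniform01 (A i))"
proof -
  have meas: "(\<lambda>v. indicator (A i) (frac (v - y)) :: ennreal) \<in> borel_measurable uniform01"
    if "i \<in> J" for i
  proof -
    have [measurable]: "A i \<in> sets borel"
      using assms(2) that .
    show ?thesis
      by measurable
  qed
  have "(\<integral>\<^sup>+x. (\<Prod>i\<in>J. indicator (A i) (frac (x i - y))) \<partial>PiM J (\<lambda>_. uniform01))
      = (\<Prod>i\<in>J. \<integral>\<^sup>+v. indicator (A i) (frac (v - y)) \<partial>uniform01)"
    by (rule uniform01_product.product_nn_integral_prod[OF assms(1) meas])
  also have "\<dots> = (\<Prod>i\<in>J. emeasure uniform01 (A i))"
    using assms meas by (intro prod.cong refl) (simp add: nn_integral_uniform01_rotate)
  finally show ?thesis .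
qed

lemma rotate_sample_in_PiE:
  "j < n \<Longrightarrow> rotate_sample n j u \<in> Pi\<^sub>E {..<n} A
    \<longleftrightarrow> 1 - u j \<in> A j \<and> (\<lambda>i. frac (u i - u j)) \<in> Pi ({..<n} - {j}) A"
  by (auto simp: rotate_sample_def PiE_def Pi_def)

lemma nn_integral_rotate_sample_slice:
  assumes j: "j < n" and A: "\<And>i. i < n \<Longrightarrow> A i \<in> sets borel" and y: "0 < y" "y < 1"
  shows "(\<integral>\<^sup>+x. indicator (Pi\<^sub>E {..<n} A) (rotate_sample n j (x(j := y)))
      \<partial>PiM ({..<n} - {j}) (\<lambda>_. uniform01))
    = indicator (A j) (1 - y) * (\<Prod>i\<in>{..<n} - {j}. emeasure uniform01 (A i))"
proof -
  have "indicator (Pi\<^sub>E {..<n} A) (rotate_sample n j (x(j := y)))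
      = indicator (A j) (1 - y) * (\<Prod>i\<in>{..<n} - {j}. indicator (A i) (frac (x i - y)) :: ennreal)" for x
  proof -
    have "rotate_sample n j (x(j := y)) \<in> Pi\<^sub>E {..<n} A
        \<longleftrightarrow> 1 - y \<in> A j \<and> (\<lambda>i. frac (x i - y)) \<in> Pi ({..<n} - {j}) A"
      using j by (simp add: rotate_sample_in_PiE Pi_def)
    then have "indicator (Pi\<^sub>E {..<n} A) (rotate_sample n j (x(j := y)))
        = indicator (A j) (1 - y) * (indicator (Pi ({..<n} - {j}) A) (\<lambda>i. frac (x i - y)) :: ennreal)"
      by (simp add: indicator_def)
    then show ?thesis
      by (simp add: prod_indicator_Pi)
  qed
  then have "(\<integral>\<^sup>+x. indicator (Pi\<^sub>E {..<n} A) (rotate_sample n j (x(j := y)))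
        \<partial>PiM ({..<n} - {j}) (\<lambda>_. uniform01))
      = indicator (A j) (1 - y) * (\<integral>\<^sup>+x. (\<Prod>i\<in>{..<n} - {j}. indicator (A i) (frac (x i - y)))
        \<partial>PiM ({..<n} - {j}) (\<lambda>_. uniform01))"
    by (cases "1 - y \<in> A j") simp_all
  also have "\<dots> = indicator (A j) (1 - y) * (\<Prod>i\<in>{..<n} - {j}. emeasure uniform01 (A i))"
    using A y by (subst nn_integral_rotated_box) auto
  finally show ?thesis .
qed

lemma distr_rotate_sample:
  assumes "j < n"
  shows "distr (uniform_cube n) (uniform_cube n) (rotate_sample n j) = uniform_cube n"
proof (rule uniform01_product.PiM_eqI)
  note assms [simp]
  fix A assume "\<And>i. i \<in> {..<n} \<Longrightarrow> A i \<in> sets uniform01"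
  then have A: "\<And>i. i < n \<Longrightarrow> A i \<in> sets borel"
    by simp
  have [measurable]: "A j \<in> sets borel" "Pi\<^sub>E {..<n} A \<in> sets (uniform_cube n)"
    using A by (auto intro!: sets_PiM_I_finite)
  define J where "J = {..<n} - {j}"
  have J: "{..<n} = insert j J" "j \<notin> J" "finite J"
    using assms by (auto simp: J_def)
  have box_measurable: "(\<lambda>u. indicator (Pi\<^sub>E {..<n} A) (rotate_sample n j u) :: ennreal)
      \<in> borel_measurable (uniform_cube n)"
    by measurable
  have "emeasure (distr (uniform_cube n) (uniform_cube n) (rotate_sample n j)) (Pi\<^sub>E {..<n} A)
      = (\<integral>\<^sup>+u. indicator (Pi\<^sub>E {..<n} A) (rotate_sample n j u) \<partial>uniform_cube n)"
    by (simp add: nn_integral_indicator[symmetric] nn_integral_distr del: nn_integral_indicator)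
  also have "\<dots> = (\<integral>\<^sup>+y. (\<integral>\<^sup>+x. indicator (Pi\<^sub>E {..<n} A) (rotate_sample n j (x(j := y)))
      \<partial>PiM J (\<lambda>_. uniform01)) \<partial>uniform01)"
    using box_measurable unfolding J(1) by (rule uniform01_product.product_nn_integral_insert_rev[OF J(3,2)])
  also have "\<dots> = (\<integral>\<^sup>+y. indicator (A j) (1 - y) * (\<Prod>i\<in>J. emeasure uniform01 (A i)) \<partial>uniform01)"
    using AE_uniform01 by (intro nn_integral_cong_AE, eventually_elim)
      (simp add: J_def A nn_integral_rotate_sample_slice)
  also have "\<dots> = (\<integral>\<^sup>+y. indicator (A j) (1 - y) \<partial>uniform01) * (\<Prod>i\<in>J. emeasure uniform01 (A i))"
    by (intro nn_integral_multc) measurable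
  also have "(\<integral>\<^sup>+y. indicator (A j) (1 - y) \<partial>uniform01) = emeasure uniform01 (A j)"
    by (subst nn_integral_uniform01_reflect) simp_all
  also have "emeasure uniform01 (A j) * (\<Prod>i\<in>J. emeasure uniform01 (A i))
      = (\<Prod>i\<in>{..<n}. emeasure uniform01 (A i))"
    unfolding J(1) using J(2,3) by simp
  finally show "emeasure (distr (uniform_cube n) (uniform_cube n) (rotate_sample n j)) (Pi\<^sub>E {..<n} A)
      = (\<Prod>i\<in>{..<n}. emeasure uniform01 (A i))" .
qed simp_all

lemma measure_rotate_sample_vimage:
  assumes "j < n" "A \<in> sets (uniform_cube n)"
  shows "measure (uniform_cube n) (rotate_sample n j -` A \<inter> space (uniform_cube n)) = measure (uniform_cube n) A"
  using measure_distr[OF measurable_rotate_sample assms(2), of j] assms(1) by (simp add: distr_rotate_sample)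

lemma sum_measure_sample_rank_eq_le:
  assumes [measurable]: "Measurable.pred (uniform_cube n) P"
  shows "(\<Sum>j<n. measure (uniform_cube n) {v \<in> space (uniform_cube n). sample_rank n v j = K \<and> P v})
    \<le> measure (uniform_cube n) {v \<in> space (uniform_cube n). P v}"
proof -
  define E where "E j = {v \<in> space (uniform_cube n). sample_rank n v j = K \<and> P v \<and> inj_on v {..<n}}" for j
  have [measurable]: "E j \<in> sets (uniform_cube n)" if "j < n" for j
  proof -
    note that [simp]
    show ?thesis
      unfolding E_def by measurable
  qed
  have "measure (uniform_cube n) {v \<in> space (uniform_cube n). sample_rank n v j = K \<and> P v}
      = measure (uniform_cube n) (E j)" if "j < n" for j
  proof (rule measure_eq_AE)
    show "AE v in uniform_cube n. v \<in> {v \<in> space (uniform_cube n). sample_rank n v j = K \<and> P v}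
        \<longleftrightarrow> v \<in> E j"
      using AE_uniform_cube_generic by eventually_elim (auto simp: E_def)
  qed (use that in auto)
  then have "(\<Sum>j<n. measure (uniform_cube n) {v \<in> space (uniform_cube n). sample_rank n v j = K \<and> P v})
      = (\<Sum>j<n. measure (uniform_cube n) (E j))"
    by simp
  also have "\<dots> = measure (uniform_cube n) (\<Union>j<n. E j)"
  proof (intro uniform01_product.P.finite_measure_finite_Union[symmetric])
    show "disjoint_family_on E {..<n}"
      unfolding disjoint_family_on_def E_def using inj_on_sample_rank by (auto dest: inj_onD)
  qed auto
  also have "\<dots> \<le> measure (uniform_cube n) {v \<in> space (uniform_cube n). P v}"
    by (intro uniform01_product.P.finite_measure_mono) (auto simp: E_def)
  finally show ?thesis .
qed

section \<open>Chernoff bound for the empirical distribution function\<close>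

lemma nn_integral_uniform01_step:
  assumes "0 < x" "x < 1" "0 \<le> r"
  shows "(\<integral>\<^sup>+y. (if y \<le> x then ennreal r else 1) \<partial>uniform01) = ennreal (1 - (1 - r) * x)"
proof -
  have "(\<integral>\<^sup>+y. (if y \<le> x then ennreal r else 1) \<partial>uniform01)
      = (\<integral>\<^sup>+y. ennreal r * indicator {..x} y + indicator {x<..} y \<partial>uniform01)"
    by (intro nn_integral_cong) (auto simp: indicator_def)
  also have "\<dots> = ennreal r * emeasure uniform01 {..x} + emeasure uniform01 {x<..}"
    by (subst nn_integral_add) (auto simp: nn_integral_cmult_indicator)
  also have "{0<..<1} \<inter> {..x} = {0<..x}" "{0<..<1} \<inter> {x<..} = {x<..<1}"
    using assms by auto
  then have "ennreal r * emeasure uniform01 {..x} + emeasure uniform01 {x<..} = ennreal (r * x + (1 - x))"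
    using assms by (simp add: emeasure_uniform01 ennreal_mult ennreal_plus)
  finally show ?thesis
    by (simp add: algebra_simps)
qed

lemma measure_count_le_chernoff:
  assumes x: "0 < x" "x < 1" and r: "0 < r" "r \<le> 1"
  shows "measure (uniform_cube n) {v \<in> space (uniform_cube n). count_le n v x \<le> m}
    \<le> (1 / r) ^ m * (1 - (1 - r) * x) ^ n"
proof -
  define g :: "real \<Rightarrow> ennreal" where "g y = (if y \<le> x then ennreal r else 1)" for y
  have [measurable]: "g \<in> borel_measurable borel"
    unfolding g_def by measurable
  have prod_g: "(\<Prod>l<n. g (v l)) = ennreal (r ^ count_le n v x)" for v
  proof -
    have "(\<Prod>l<n. g (v l)) = (\<Prod>l\<in>{l\<in>{..<n}. v l \<le> x}. ennreal r)"
      unfolding g_def by (subst prod.inter_filter[symmetric]) auto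
    then show ?thesis
      using r by (simp add: count_le_def ennreal_power)
  qed
  \<comment> \<open>Markov's inequality for \<open>r ^ count_le n v x = (\<Prod>l<n. g (v l))\<close>\<close>
  have "emeasure (uniform_cube n) {v \<in> space (uniform_cube n). count_le n v x \<le> m}
      \<le> (\<integral>\<^sup>+v. ennreal ((1 / r) ^ m) * (\<Prod>l<n. g (v l)) \<partial>uniform_cube n)"
  proof (subst nn_integral_indicator[symmetric], measurable, intro nn_integral_mono)
    fix v
    have "1 \<le> (1 / r) ^ m * r ^ count_le n v x" if "count_le n v x \<le> m"
      using r power_decreasing[OF that, of r] by (simp add: power_one_over field_simps)
    then show "indicator {v \<in> space (uniform_cube n). count_le n v x \<le> m} v
        \<le> ennreal ((1 / r) ^ m) * (\<Prod>l<n. g (v l))"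
      using r by (auto simp: indicator_def prod_g ennreal_mult[symmetric] simp flip: ennreal_1)
  qed
  also have "\<dots> = ennreal ((1 / r) ^ m) * (\<integral>\<^sup>+v. (\<Prod>l<n. g (v l)) \<partial>uniform_cube n)"
    by (rule nn_integral_cmult) measurable
  also have "(\<integral>\<^sup>+v. (\<Prod>l<n. g (v l)) \<partial>uniform_cube n) = (\<Prod>l<n. \<integral>\<^sup>+y. g y \<partial>uniform01)"
    by (rule uniform01_product.product_nn_integral_prod) auto
  also have "ennreal ((1 / r) ^ m) * (\<Prod>l<n. \<integral>\<^sup>+y. g y \<partial>uniform01)
      = ennreal ((1 / r) ^ m * (1 - (1 - r) * x) ^ n)"
    using x r by (simp add: g_def nn_integral_uniform01_step ennreal_power ennreal_mult mult_le_one)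
  finally show ?thesis
    using x r by (simp add: uniform01_product.P.emeasure_eq_measure mult_le_one)
qed

lemma chernoff_exponent_le:
  fixes m n :: nat and t :: real
  assumes m: "1 \<le> m" and t: "0 < t" and mu: "(sqrt m + sqrt t)\<^sup>2 < n"
  shows "((sqrt m + sqrt t)\<^sup>2 / m) ^ m * (1 - ((sqrt m + sqrt t)\<^sup>2 - m) / n) ^ n \<le> exp (- t)"
proof -
  define s q where "s = sqrt m" and "q = sqrt t"
  have s: "0 < s" "s\<^sup>2 = m" and q: "0 < q" "q\<^sup>2 = t"
    using m t by (auto simp: s_def q_def)
  have "0 < n"
    using mu by (metis of_nat_0_less_iff order.strict_trans1 zero_le_power2)
  have exponent: "(s + q)\<^sup>2 - m = 2 * s * q + t"
    using s q by (simp add: power2_eq_square algebra_simps)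
  have "(s + q)\<^sup>2 / m = (1 + q / s)\<^sup>2"
    using s by (simp add: field_simps power2_eq_square)
  then have "((s + q)\<^sup>2 / m) ^ m = (1 + q / s) ^ (2 * m)"
    by (simp add: power_mult)
  also have "\<dots> \<le> exp (q / s) ^ (2 * m)"
    using s q by (intro power_mono) (auto simp: exp_ge_add_one_self)
  also have "\<dots> = exp (2 * s * q)"
    using s by (simp add: exp_of_nat_mult[symmetric] field_simps power2_eq_square)
  finally have first: "((s + q)\<^sup>2 / m) ^ m \<le> exp (2 * s * q)" .
  have "(1 - ((s + q)\<^sup>2 - m) / n) ^ n = (1 + (- ((s + q)\<^sup>2 - m)) / n) ^ n"
    by (simp only: diff_conv_add_uminus minus_divide_left)
  also have "\<dots> \<le> exp (- ((s + q)\<^sup>2 - m))"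
    using mu \<open>0 < n\<close> by (intro exp_ge_one_plus_x_over_n_power_n) (auto simp: s_def q_def)
  finally have second: "(1 - ((s + q)\<^sup>2 - m) / n) ^ n \<le> exp (- ((s + q)\<^sup>2 - m))" .
  have "0 \<le> (1 - ((s + q)\<^sup>2 - m) / n) ^ n"
    using mu \<open>0 < n\<close> by (intro zero_le_power) (simp add: s_def q_def field_simps)
  then have "((s + q)\<^sup>2 / m) ^ m * (1 - ((s + q)\<^sup>2 - m) / n) ^ n
      \<le> exp (2 * s * q) * exp (- ((s + q)\<^sup>2 - m))"
    using first second by (intro mult_mono) auto
  also have "\<dots> = exp (- t)"
    by (simp add: exponent flip: exp_add)
  finally show ?thesis
    by (simp add: s_def q_def)
qed

lemma measure_count_le_eq_0:
  assumes "m < n" "1 \<le> x"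
  shows "measure (uniform_cube n) {v \<in> space (uniform_cube n). count_le n v x \<le> m} = 0"
proof -
  have "AE v in uniform_cube n. count_le n v x \<le> m \<longrightarrow> v \<in> {}"
    using AE_uniform_cube_generic
  proof eventually_elim
    case (elim v)
    then have "v l \<le> x" if "l < n" for l
      using assms(2) that by force
    then have "{l\<in>{..<n}. v l \<le> x} = {..<n}"
      by auto
    then have "count_le n v x = n"
      by (simp add: count_le_def)
    then show ?case
      using assms(1) by simp
  qed
  then have "measure (uniform_cube n) {v \<in> space (uniform_cube n). count_le n v x \<le> m}
      \<le> measure (uniform_cube n) {}"
    by (intro uniform01_product.P.finite_measure_mono_AE) auto
  then show ?thesis
    by (simp add: measure_le_0_iff)
qed

lemma measure_count_le_tail:
  assumes m: "1 \<le> m" "m < n" and t: "0 < t"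
  shows "measure (uniform_cube n) {v \<in> space (uniform_cube n). count_le n v ((sqrt m + sqrt t)\<^sup>2 / n) \<le> m}
    \<le> exp (- t)"
proof -
  define \<mu> where "\<mu> = (sqrt m + sqrt t)\<^sup>2"
  have "(sqrt m)\<^sup>2 \<le> (sqrt m + sqrt t)\<^sup>2"
    using t by (intro power_mono) auto
  moreover have "0 < sqrt m + sqrt t"
    using t by (simp add: add_nonneg_pos)
  ultimately have \<mu>: "m \<le> \<mu>" "0 < \<mu>"
    unfolding \<mu>_def by simp_all
  show ?thesis
  proof (cases "\<mu> < n")
    case False
    then show ?thesis
      using measure_count_le_eq_0[of m n "\<mu> / n"] m by (simp add: \<mu>_def le_divide_eq)
  next
    case True
    define r where "r = m / \<mu>"
    have r: "0 < r" "r \<le> 1" "1 / r = \<mu> / m" "1 - (1 - r) * (\<mu> / n) = 1 - (\<mu> - m) / n"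
      using m \<mu> by (auto simp: r_def field_simps)
    have "measure (uniform_cube n) {v \<in> space (uniform_cube n). count_le n v (\<mu> / n) \<le> m}
        \<le> (\<mu> / m) ^ m * (1 - (\<mu> - m) / n) ^ n"
      using measure_count_le_chernoff[of "\<mu> / n" r n m] True \<mu> r by (simp add: field_simps)
    also have "\<dots> \<le> exp (- t)"
      unfolding \<mu>_def using m t True by (intro chernoff_exponent_le) (auto simp: \<mu>_def)
    finally show ?thesis
      by (simp add: \<mu>_def)
  qed
qed

section \<open>Tail bound for the spacing\<close>

lemma measure_spacing_gt_le_sum_rank:
  fixes x :: real
  assumes k: "1 \<le> k1" "1 \<le> k2" "k1 + k2 \<le> n"
  defines "E j \<equiv> {v \<in> space (uniform_cube n). sample_rank n v j = k2 - 1 \<and> count_le n v x < k1 + k2}"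
  shows "measure (uniform_cube n)
      {v \<in> space (uniform_cube n). 1 - order_stat v n (n - k2 + 1) + order_stat v n k1 > x}
    \<le> (\<Sum>j<n. measure (uniform_cube n) (E j))"
proof -
  have E [measurable]: "E j \<in> sets (uniform_cube n)" if "j < n" for j
  proof -
    note that [simp]
    show ?thesis
      unfolding E_def by measurable
  qed
  have rotated: "rotate_sample n j -` E j \<inter> space (uniform_cube n) \<in> sets (uniform_cube n)" if "j < n" for j
    using that by measurable
  have "measure (uniform_cube n)
      {v \<in> space (uniform_cube n). 1 - order_stat v n (n - k2 + 1) + order_stat v n k1 > x}
    \<le> measure (uniform_cube n) (\<Union>j<n. rotate_sample n j -` E j \<inter> space (uniform_cube n))"
  proof (rule uniform01_product.P.finite_measure_mono_AE)
    show "AE v in uniform_cube n.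
        v \<in> {v \<in> space (uniform_cube n). 1 - order_stat v n (n - k2 + 1) + order_stat v n k1 > x}
      \<longrightarrow> v \<in> (\<Union>j<n. rotate_sample n j -` E j \<inter> space (uniform_cube n))"
      using AE_uniform_cube_generic[of n]
    proof eventually_elim
      case (elim v)
      show ?case
      proof
        assume "v \<in> {v \<in> space (uniform_cube n). 1 - order_stat v n (n - k2 + 1) + order_stat v n k1 > x}"
        then have gap: "x < 1 - order_stat v n (n - k2 + 1) + order_stat v n k1"
          and space: "v \<in> space (uniform_cube n)"
          by auto
        obtain j where "j < n" "sample_rank n (rotate_sample n j v) j = k2 - 1"
          "count_le n (rotate_sample n j v) x < k1 + k2"
          by (rule rotate_sample_spacing[OF elim[THEN conjunct1] elim[THEN conjunct2, rule_format] k gap])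
        moreover have "rotate_sample n j v \<in> space (uniform_cube n)"
          using measurable_space[OF measurable_rotate_sample[OF \<open>j < n\<close>] space] .
        ultimately show "v \<in> (\<Union>j<n. rotate_sample n j -` E j \<inter> space (uniform_cube n))"
          using space by (auto simp: E_def)
      qed
    qed
  qed (use rotated in auto)
  also have "\<dots> \<le> (\<Sum>j<n. measure (uniform_cube n) (rotate_sample n j -` E j \<inter> space (uniform_cube n)))"
    using rotated by (intro uniform01_product.P.finite_measure_subadditive_finite) auto
  also have "\<dots> = (\<Sum>j<n. measure (uniform_cube n) (E j))"
    by (intro sum.cong refl measure_rotate_sample_vimage E) auto
  finally show ?thesis .
qed

lemma measure_spacing_gt_le_count:
  assumes "1 \<le> k1" "1 \<le> k2" "k1 + k2 \<le> n"
  shows "measure (uniform_cube n)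
      {v \<in> space (uniform_cube n). 1 - order_stat v n (n - k2 + 1) + order_stat v n k1 > x}
    \<le> measure (uniform_cube n) {v \<in> space (uniform_cube n). count_le n v x < k1 + k2}"
  using measure_spacing_gt_le_sum_rank[OF assms, of x]
    sum_measure_sample_rank_eq_le[where n = n and P = "\<lambda>v. count_le n v x < k1 + k2" and K = "k2 - 1"]
  by simp

lemma (in prob_space) distr_uniform_sample:
  assumes "indep_vars (\<lambda>_. borel) U {..<n}" "0 < n"
    and "\<And>i. i < n \<Longrightarrow> U i \<in> borel_measurable M"
    and "\<And>i. i < n \<Longrightarrow> distr M lborel (U i) = uniform_measure lborel {0<..<1}"
  shows "(\<lambda>\<omega>. \<lambda>i\<in>{..<n}. U i \<omega>) \<in> measurable M (uniform_cube n)"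
    and "distr M (uniform_cube n) (\<lambda>\<omega>. \<lambda>i\<in>{..<n}. U i \<omega>) = uniform_cube n"
proof -
  have sets_cube: "sets (uniform_cube n) = sets (PiM {..<n} (\<lambda>_. borel))"
    by (intro sets_PiM_cong) auto
  show "(\<lambda>\<omega>. \<lambda>i\<in>{..<n}. U i \<omega>) \<in> measurable M (uniform_cube n)"
    unfolding measurable_cong_sets[OF refl sets_cube] using assms(3) by measurable
  have "distr M (PiM {..<n} (\<lambda>_. borel)) (\<lambda>\<omega>. \<lambda>i\<in>{..<n}. U i \<omega>)
      = PiM {..<n} (\<lambda>i. distr M borel (U i))"
    using assms(1-3) indep_vars_iff_distr_eq_PiM'[where I = "{..<n}" and M' = "\<lambda>_. borel" and X = U]
    by (simp add: lessThan_empty_iff)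
  also have "\<dots> = uniform_cube n"
  proof (rule PiM_cong)
    fix i assume "i \<in> {..<n}"
    have "distr M borel (U i) = distr M lborel (U i)"
      by (rule distr_cong) auto
    then show "distr M borel (U i) = uniform01"
      using assms(4) \<open>i \<in> {..<n}\<close> by (simp add: uniform01_def)
  qed simp
  finally show "distr M (uniform_cube n) (\<lambda>\<omega>. \<lambda>i\<in>{..<n}. U i \<omega>) = uniform_cube n"
    by (simp add: distr_cong[OF refl sets_cube refl])
qed

lemma sets_uniform_cube_spacing_gt:
  assumes "1 \<le> k1" "1 \<le> k2" "k1 + k2 \<le> n"
  shows "{v \<in> space (uniform_cube n). 1 - order_stat v n (n - k2 + 1) + order_stat v n k1 > x}
    \<in> sets (uniform_cube n)"
proof -
  have [measurable]: "(\<lambda>v. order_stat v n (n - k2 + 1)) \<in> borel_measurable (uniform_cube n)"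
    "(\<lambda>v. order_stat v n k1) \<in> borel_measurable (uniform_cube n)"
    using assms by (auto intro!: borel_measurable_order_stat)
  show ?thesis
    by measurable
qed

theorem proposition4p4:
  fixes M :: "'a measure" and U :: "nat \<Rightarrow> 'a \<Rightarrow> real"
    and n k1 k2 :: nat and t :: real
  assumes "prob_space M"
    and "prob_space.indep_vars M (\<lambda>_. borel) U {..<n}"
    and "\<And>i. i < n \<Longrightarrow> U i \<in> borel_measurable M"
    and "\<And>i. i < n \<Longrightarrow> distr M lborel (U i) = uniform_measure lborel {0<..<1}"
    and "k1 \<ge> 1" and "k2 \<ge> 1" and "k1 + k2 < n"
    and "t > 0"
  shows "measure M {\<omega> \<in> space M.
            1 - order_stat (\<lambda>i. U i \<omega>) n (n - k2 + 1) + order_stat (\<lambda>i. U i \<omega>) n k1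
              > (sqrt (real (k1 + k2) - 1) + sqrt t)\<^sup>2 / real n} \<le> exp (- t)"
proof -
  interpret prob_space M by fact
  define X where "X \<omega> = (\<lambda>i\<in>{..<n}. U i \<omega>)" for \<omega>
  define x where "x = (sqrt (real (k1 + k2 - 1)) + sqrt t)\<^sup>2 / real n"
  define gap where "gap v = 1 - order_stat v n (n - k2 + 1) + order_stat v n k1" for v
  have X: "X \<in> measurable M (uniform_cube n)" and law: "distr M (uniform_cube n) X = uniform_cube n"
    unfolding X_def using distr_uniform_sample assms(2-4,7) by auto
  have "{\<omega> \<in> space M. gap (\<lambda>i. U i \<omega>) > x} = X -` {v \<in> space (uniform_cube n). gap v > x} \<inter> space M"
    using measurable_space[OF X] by (auto simp: gap_def X_def cong: order_stat_cong)
  then have "measure M {\<omega> \<in> space M. gap (\<lambda>i. U i \<omega>) > x}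
      = measure (uniform_cube n) {v \<in> space (uniform_cube n). gap v > x}"
    using measure_distr[OF X sets_uniform_cube_spacing_gt] assms(5-7) by (simp add: law gap_def)
  also have "\<dots> \<le> measure (uniform_cube n) {v \<in> space (uniform_cube n). count_le n v x < k1 + k2}"
    using measure_spacing_gt_le_count assms(5-7) unfolding gap_def by simp
  also have "{v \<in> space (uniform_cube n). count_le n v x < k1 + k2}
      = {v \<in> space (uniform_cube n). count_le n v x \<le> k1 + k2 - 1}"
    using assms(5) by auto
  also have "measure (uniform_cube n) \<dots> \<le> exp (- t)"
    using measure_count_le_tail[of "k1 + k2 - 1" n t] assms(5-8) by (simp add: x_def of_nat_diff)
  finally show ?thesis
    using assms(5,6) by (simp add: gap_def x_def of_nat_diff)
qed

end
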